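(* Let $f:B_E\to \mathbb{C}$ be analytic and $x\in B_E$. Then $$(1-\|x\|^2)\,\mathcal Rf(x)=\frac{-1}{2\pi i }\int_{|\xi|=1} f(\varphi_x(\xi x))\frac{d\xi}{\xi^2}.$$
   Context: $E$ is a complex Hilbert space of arbitrary dimension with inner product $\langle\cdot,\cdot\rangle$ and open unit ball $B_E$. $\mathcal Rf(x)=f'(x)(x)$ is the radial derivative. For $a\in B_E$, $\varphi_a(y)=(s_aQ_a+P_a)\big(\frac{a-y}{1-\langle y,a\rangle}\big)$, where $s_a=\sqrt{1-\|a\|^2}$, $P_a$ is the orthogonal projection onto $\mathbb Ca$ and $Q_a=I-P_a$ (with $\varphi_0(y)=-y$). *)

theory Defs
  imports "HOL-Complex_Analysis.Complex_Analysis"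
begin

text \<open>A complex inner product space is a real inner
product space together with a complex scalar multiplication extending the real one and a
complex-valued inner product, linear in the first argument and conjugate-symmetric, whose
real part is the underlying real inner product (so the norm is the Hilbert norm
sqrt of the complex inner product of x with itself).  Complex Hilbert spaces are
the instances that are moreover complete.\<close>

class complex_inner = real_inner +
  fixes scaleC :: "complex \<Rightarrow> 'a \<Rightarrow> 'a" (infixr \<open>*\<^sub>C\<close> 75)
    and cinner :: "'a \<Rightarrow> 'a \<Rightarrow> complex"
  assumes scaleC_add_right: "c *\<^sub>C (x + y) = c *\<^sub>C x + c *\<^sub>C y"
    and scaleC_add_left: "(b + c) *\<^sub>C x = b *\<^sub>C x + c *\<^sub>C x"
    and scaleC_scaleC: "b *\<^sub>C (c *\<^sub>C x) = (b * c) *\<^sub>C x"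
    and scaleC_one: "1 *\<^sub>C x = x"
    and scaleC_of_real: "complex_of_real r *\<^sub>C x = r *\<^sub>R x"
    and cinner_add_left: "cinner (x + y) z = cinner x z + cinner y z"
    and cinner_scaleC_left: "cinner (c *\<^sub>C x) y = c * cinner x y"
    and cinner_commute: "cinner y x = cnj (cinner x y)"
    and inner_cinner: "inner x y = Re (cinner x y)"

instantiation complex :: complex_inner
begin
definition scaleC_complex :: "complex \<Rightarrow> complex \<Rightarrow> complex" where "scaleC_complex c z = c * z"
definition cinner_complex :: "complex \<Rightarrow> complex \<Rightarrow> complex" where "cinner_complex z w = z * cnj w"
instance
  by standard (auto simp: scaleC_complex_def cinner_complex_def algebra_simps
      scaleR_conv_of_real inner_complex_def)
end

text \<open>Orthogonal projection onto the line spanned by a (P_a; it is 0 for a = 0).\<close>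
definition proj_line :: "'a::complex_inner \<Rightarrow> 'a \<Rightarrow> 'a" where
  "proj_line a y = (cinner y a / complex_of_real ((norm a)\<^sup>2)) *\<^sub>C a"

definition ball_aut :: "'a::complex_inner \<Rightarrow> 'a \<Rightarrow> 'a" where
  "ball_aut a y =
     (let z = (1 / (1 - cinner y a)) *\<^sub>C (a - y)
      in sqrt (1 - (norm a)\<^sup>2) *\<^sub>R (z - proj_line a z) + proj_line a z)"

text \<open>Analytic (= Frechet holomorphic) functions on an open set: Frechet differentiable
with complex-linear derivative at every point.\<close>
definition holomorphic_ball :: "('a::complex_inner \<Rightarrow> complex) \<Rightarrow> 'a set \<Rightarrow> bool" where
  "holomorphic_ball f S \<longleftrightarrow>
     (\<forall>x\<in>S. \<exists>D. (f has_derivative D) (at x) \<and> (\<forall>c v. D (c *\<^sub>C v) = c * D v))"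

definition radial_deriv :: "('a::real_normed_vector \<Rightarrow> complex) \<Rightarrow> 'a \<Rightarrow> complex" where
  "radial_deriv f x = frechet_derivative f (at x) x"

end

theory Submission
  imports Defs
begin

text \<open>On the complex line through x the automorphism acts by a Moebius map of the disc:
phi_x(xi x) = m(xi) x with m(xi) = (1 - xi) / (1 - xi |x|^2). The function g = f o (m * x) is
holomorphic on a neighbourhood of the closed unit disc, so Cauchy's formula for the first
derivative turns the integral into 2 pi i g'(0), and the chain rule gives
g'(0) = m'(0) Rf(x) = (|x|^2 - 1) Rf(x).\<close>

lemma scaleC_zero_right [simp]: "(c::complex) *\<^sub>C (0::'a::complex_inner) = 0"
proof -
  have "c *\<^sub>C (0::'a) = c *\<^sub>C 0 + c *\<^sub>C 0" using scaleC_add_right[of c "0::'a" 0] by simp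
  thus ?thesis by simp
qed

lemma scaleC_diff_left: "b *\<^sub>C x - c *\<^sub>C x = (b - c) *\<^sub>C (x::'a::complex_inner)"
  by (metis add_diff_cancel_right' diff_add_cancel scaleC_add_left)

lemma cinner_scaleC_right: "cinner (x::'a::complex_inner) (c *\<^sub>C y) = cnj c * cinner x y"
  by (metis cinner_commute cinner_scaleC_left complex_cnj_cnj complex_cnj_mult)

lemma cinner_self: "cinner (x::'a::complex_inner) x = complex_of_real ((norm x)\<^sup>2)"
proof -
  have "Im (cinner x x) = 0" using cinner_commute[of x x]
    by (metis cnj.simps(2) complex.expand neg_equal_zero)
  moreover have "Re (cinner x x) = (norm x)\<^sup>2"
    using inner_cinner[of x x] by (simp add: power2_norm_eq_inner)
  ultimately show ?thesis by (simp add: complex_eq_iff)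
qed

lemma norm_scaleC: "norm (c *\<^sub>C (x::'a::complex_inner)) = cmod c * norm x"
proof -
  have "(norm (c *\<^sub>C x))\<^sup>2 = Re (cinner (c *\<^sub>C x) (c *\<^sub>C x))"
    by (simp add: power2_norm_eq_inner inner_cinner)
  also have "cinner (c *\<^sub>C x) (c *\<^sub>C x) = (c * cnj c) * cinner x x"
    by (simp add: cinner_scaleC_left cinner_scaleC_right mult.assoc)
  also have "\<dots> = complex_of_real ((cmod c)\<^sup>2 * (norm x)\<^sup>2)"
    by (simp only: complex_norm_square[symmetric] of_real_mult cinner_self)
  finally have "(norm (c *\<^sub>C x))\<^sup>2 = (cmod c * norm x)\<^sup>2" by (simp add: power_mult_distrib)
  thus ?thesis by (simp add: power2_eq_iff_nonneg)
qed

lemma bounded_linear_scaleC_left: "bounded_linear (\<lambda>c::complex. c *\<^sub>C (x::'a::complex_inner))"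
proof
  fix b c :: complex and r :: real
  show "(b + c) *\<^sub>C x = b *\<^sub>C x + c *\<^sub>C x" by (rule scaleC_add_left)
  show "(r *\<^sub>R b) *\<^sub>C x = r *\<^sub>R (b *\<^sub>C x)"
    by (metis scaleC_of_real scaleC_scaleC scaleR_conv_of_real)
  show "\<exists>K. \<forall>c. norm (c *\<^sub>C x) \<le> norm c * K"
    by (rule exI[of _ "norm x"]) (simp add: norm_scaleC)
qed

lemma proj_line_scaleC: "proj_line (a::'a::complex_inner) (c *\<^sub>C a) = c *\<^sub>C a"
  by (cases "a = 0") (simp_all add: proj_line_def cinner_scaleC_left cinner_self)

definition line_mobius :: "real \<Rightarrow> complex \<Rightarrow> complex" where
  "line_mobius r \<xi> = (1 - \<xi>) / (1 - \<xi> * complex_of_real (r\<^sup>2))"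

lemma ball_aut_scaleC_self:
  fixes x :: "'a::complex_inner"
  shows "ball_aut x (\<xi> *\<^sub>C x) = line_mobius (norm x) \<xi> *\<^sub>C x"
proof -
  have "(1 / (1 - cinner (\<xi> *\<^sub>C x) x)) *\<^sub>C (x - \<xi> *\<^sub>C x) = line_mobius (norm x) \<xi> *\<^sub>C x"
    using scaleC_diff_left[of 1 x \<xi>]
    by (simp add: scaleC_one scaleC_scaleC cinner_scaleC_left cinner_self line_mobius_def)
  thus ?thesis unfolding ball_aut_def Let_def by (simp add: proj_line_scaleC)
qed

lemma norm_diff_lt_norm_one_minus_mult:
  fixes r :: real and w :: complex
  assumes "0 \<le> r" "r < 1" "cmod w < 1"
  shows "cmod (of_real r - w) < cmod (1 - w * of_real r)"
proof -
  have "(cmod w)\<^sup>2 < 1" using assms by (simp add: power_less_one_iff abs_less_iff)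
  hence w: "Re w ^ 2 + Im w ^ 2 < 1" by (simp add: cmod_power2)
  have "(cmod (1 - w * of_real r))\<^sup>2 - (cmod (of_real r - w))\<^sup>2
        = (1 - r\<^sup>2) * (1 - (Re w ^ 2 + Im w ^ 2))"
    unfolding cmod_power2 by (simp add: power2_eq_square algebra_simps)
  moreover have "0 < (1 - r\<^sup>2) * (1 - (Re w ^ 2 + Im w ^ 2))"
    using w assms by (intro mult_pos_pos) (auto simp: power_less_one_iff abs_less_iff)
  ultimately show ?thesis by (simp add: power2_less_imp_less)
qed

lemma line_mobius_denom_nonzero:
  assumes "0 \<le> r" "r < 1" "cmod \<xi> * r < 1"
  shows "1 - \<xi> * complex_of_real (r\<^sup>2) \<noteq> 0"
proof
  assume "1 - \<xi> * complex_of_real (r\<^sup>2) = 0"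
  hence "cmod \<xi> * r * r = 1"
    using assms(1) by (metis eq_iff_diff_eq_0 norm_one norm_mult norm_of_real abs_of_nonneg
        power2_eq_square mult.assoc zero_le_mult_iff)
  moreover have "cmod \<xi> * r * r \<le> cmod \<xi> * r" using assms by (intro mult_left_le) auto
  ultimately show False using assms(3) by simp
qed

lemma line_mobius_maps_disc:
  assumes "0 \<le> r" "r < 1" "cmod \<xi> * r < 1"
  shows "cmod (line_mobius r \<xi>) * r < 1"
proof -
  have w: "cmod (\<xi> * of_real r) < 1" using assms by (simp add: norm_mult)
  have d: "1 - (\<xi> * of_real r) * of_real r \<noteq> 0"
    using line_mobius_denom_nonzero[OF assms] by (simp add: power2_eq_square mult.assoc)
  have "cmod (line_mobius r \<xi>) * r = cmod (line_mobius r \<xi> * of_real r)"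
    using assms(1) by (simp add: norm_mult)
  also have "line_mobius r \<xi> * of_real r = (of_real r - \<xi> * of_real r) / (1 - (\<xi> * of_real r) * of_real r)"
    unfolding line_mobius_def by (simp add: power2_eq_square algebra_simps)
  also have "cmod \<dots> < 1"
    using norm_diff_lt_norm_one_minus_mult[OF assms(1,2) w] d by (simp add: norm_divide divide_less_eq)
  finally show ?thesis .
qed

lemma line_mobius_has_field_derivative:
  assumes "1 - \<xi> * complex_of_real (r\<^sup>2) \<noteq> 0"
  shows "(line_mobius r has_field_derivative (r\<^sup>2 - 1) / (1 - \<xi> * complex_of_real (r\<^sup>2))\<^sup>2) (at \<xi>)"
  unfolding line_mobius_def using assms
  by (auto intro!: derivative_eq_intros simp: power2_eq_square field_simps)

lemma holomorphic_ball_compose_line: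
  assumes "holomorphic_ball f S" "h \<xi> *\<^sub>C v \<in> S" "(h has_field_derivative d) (at \<xi>)"
  shows "((\<lambda>\<zeta>. f (h \<zeta> *\<^sub>C v)) has_field_derivative d * frechet_derivative f (at (h \<xi> *\<^sub>C v)) v) (at \<xi>)"
proof -
  obtain D where D: "(f has_derivative D) (at (h \<xi> *\<^sub>C v))" and D_linear: "\<forall>c v. D (c *\<^sub>C v) = c * D v"
    using assms(1,2) unfolding holomorphic_ball_def by blast
  have "((\<lambda>\<zeta>. h \<zeta> *\<^sub>C v) has_derivative (\<lambda>t. (d * t) *\<^sub>C v)) (at \<xi>)"
    using bounded_linear.has_derivative[OF bounded_linear_scaleC_left
        assms(3)[unfolded has_field_derivative_def]] .
  from diff_chain_at[OF this D]
  have "((\<lambda>\<zeta>. f (h \<zeta> *\<^sub>C v)) has_derivative (\<lambda>t. D ((d * t) *\<^sub>C v))) (at \<xi>)"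
    by (simp add: o_def)
  moreover have "(\<lambda>t. D ((d * t) *\<^sub>C v)) = (*) (d * D v)"
    using D_linear by (auto simp: fun_eq_iff)
  ultimately show ?thesis
    unfolding has_field_derivative_def frechet_derivative_at[OF D, symmetric] by simp
qed

lemma holomorphic_ball_restrict_mobius_line:
  fixes f :: "'a::complex_inner \<Rightarrow> complex"
  assumes "holomorphic_ball f (ball 0 1)" "x \<in> ball 0 1"
  defines "g \<equiv> \<lambda>\<xi>. f (line_mobius (norm x) \<xi> *\<^sub>C x)"
  obtains S where "open S" "cball 0 1 \<subseteq> S" "g holomorphic_on S"
    and "deriv g 0 = ((norm x)\<^sup>2 - 1) * radial_deriv f x"
proof
  let ?r = "norm x" and ?S = "{\<xi>::complex. cmod \<xi> * norm x < 1}"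
  have r: "0 \<le> ?r" "?r < 1" using assms(2) by auto
  have gder: "(g has_field_derivative (?r\<^sup>2 - 1) / (1 - \<xi> * complex_of_real (?r\<^sup>2))\<^sup>2
                * frechet_derivative f (at (line_mobius ?r \<xi> *\<^sub>C x)) x) (at \<xi>)"
    if "\<xi> \<in> ?S" for \<xi>
    unfolding g_def
  proof (rule holomorphic_ball_compose_line[OF assms(1)])
    show "line_mobius ?r \<xi> *\<^sub>C x \<in> ball 0 1"
      using line_mobius_maps_disc[OF r] that by (simp add: norm_scaleC)
    show "(line_mobius ?r has_field_derivative (?r\<^sup>2 - 1) / (1 - \<xi> * complex_of_real (?r\<^sup>2))\<^sup>2) (at \<xi>)"
      using line_mobius_has_field_derivative line_mobius_denom_nonzero[OF r] that by simp
  qed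
  show "open ?S" by (rule open_Collect_less) (auto intro!: continuous_intros)
  show "cball 0 1 \<subseteq> ?S" using r by (auto intro: le_less_trans[OF mult_right_mono[of _ 1]])
  show "g holomorphic_on ?S"
    unfolding holomorphic_on_def field_differentiable_def
    using gder has_field_derivative_at_within by blast
  show "deriv g 0 = (?r\<^sup>2 - 1) * radial_deriv f x"
    using DERIV_imp_deriv[OF gder[of 0]]
    by (simp add: line_mobius_def radial_deriv_def scaleC_one)
qed

theorem lemma4p10:
  fixes f :: "'a::{complex_inner, complete_space} \<Rightarrow> complex" and x :: 'a
  assumes "holomorphic_ball f (ball 0 1)"
    and "x \<in> ball 0 1"
  shows "complex_of_real (1 - (norm x)\<^sup>2) * radial_deriv f x =
    - 1 / (2 * complex_of_real pi * \<i>) *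
      contour_integral (circlepath 0 1) (\<lambda>\<xi>. f (ball_aut x (\<xi> *\<^sub>C x)) / \<xi>\<^sup>2)"
proof -
  define g where "g = (\<lambda>\<xi>. f (line_mobius (norm x) \<xi> *\<^sub>C x))"
  obtain S where "open S" "cball 0 1 \<subseteq> S" and hol: "g holomorphic_on S"
    and dg: "deriv g 0 = ((norm x)\<^sup>2 - 1) * radial_deriv f x"
    using holomorphic_ball_restrict_mobius_line[OF assms] unfolding g_def by blast
  have "contour_integral (circlepath 0 1) (\<lambda>\<xi>. g \<xi> / (\<xi> - 0)\<^sup>2) = 2 * pi * \<i> * deriv g 0"
  proof (rule Cauchy_contour_integral_circlepath_2)
    show "continuous_on (cball 0 1) g"
      using holomorphic_on_imp_continuous_on[OF hol] \<open>cball 0 1 \<subseteq> S\<close> continuous_on_subset by blast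
    show "g holomorphic_on ball 0 1"
      using hol \<open>cball 0 1 \<subseteq> S\<close> ball_subset_cball holomorphic_on_subset by blast
  qed simp
  moreover have "(\<lambda>\<xi>. f (ball_aut x (\<xi> *\<^sub>C x)) / \<xi>\<^sup>2) = (\<lambda>\<xi>. g \<xi> / (\<xi> - 0)\<^sup>2)"
    by (simp add: fun_eq_iff ball_aut_scaleC_self g_def)
  ultimately show ?thesis using dg by (simp add: field_simps)
qed

end
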